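(* Let $R_s>0$, $\lambda=2^{R_s}$, and let $\gamma_d,\gamma_e$ be independent random variables where, for $t\in\{d,e\}$, $\gamma_t$ is Gamma distributed (Nakagami-$m$ fading) with shape $m_t>0$ and mean $\overline\gamma_t>0$, so that $F_{\gamma_t}(x)=\Upsilon(m_t,m_tx/\overline\gamma_t)/\Gamma(m_t)$. Let $\sigma_e^2$ be the variance of $\gamma_e$, let $P(x)=F_{\gamma_d}(\lambda-1+\lambda x)$, and define $\widetilde P_{\rm sop}:=P(\overline\gamma_e)+\frac{\sigma_e^2}{2}P''(\overline\gamma_e)$. Then $$\widetilde P_{\rm sop}=\frac{\Upsilon\!\left(m_d,\frac{m_d(\lambda-1+\lambda\overline\gamma_e)}{\overline\gamma_d}\right)}{\Gamma(m_d)}+\overline\gamma_e^2\lambda^2\,\frac{\left(\frac{m_e+1}{m_e}-1\right)G_{2,3}^{1,2}\!\left(\frac{m_d(\lambda-1+\lambda\overline\gamma_e)}{\overline\gamma_d}\,\middle|\,{0,\,1\atop m_d,\,0,\,2}\right)}{2\Gamma(m_d)(\lambda-1+\lambda\overline\gamma_e)^2}.$$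
   Context: $\Upsilon(\cdot,\cdot)$ is the lower incomplete Gamma function, $\Gamma$ the Gamma function, and $G^{m,n}_{p,q}\left(z\,\middle|\,{a_1,\dots,a_p\atop b_1,\dots,b_q}\right)$ the standard Meijer G-function. $\widetilde P_{\rm sop}$ is the second-order Taylor approximation of the secrecy outage probability $\mathbb{E}\{F_{\gamma_d}(\lambda-1+\lambda\gamma_e)\}$ around the mean of $\gamma_e$. *)

theory Defs
  imports "HOL-Probability.Probability"
begin

definition lower_inc_Gamma :: "real \<Rightarrow> real \<Rightarrow> real" where
  "lower_inc_Gamma s x = integral {0..x} (\<lambda>t. t powr (s - 1) * exp (- t))"

definition gamma_density :: "real \<Rightarrow> real \<Rightarrow> real \<Rightarrow> real" where
  "gamma_density m g x =
     (if x > 0 then (m / g) powr m * x powr (m - 1) * exp (- m * x / g) / Gamma m else 0)"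

definition gamma_cdf :: "real \<Rightarrow> real \<Rightarrow> real \<Rightarrow> real" where
  "gamma_cdf m g x = lower_inc_Gamma m (m * x / g) / Gamma m"

text \<open>Meijer G-function G^{1,n}_{p,q}(z | a_1..a_p ; b_1..b_q) (first upper index m = 1),
  p = length as, q = length bs, given by its standard residue-series representation
  (sum of residues of the Mellin-Barnes integrand at the poles of Gamma(b_1 - s)),
  i.e. DLMF 16.17.2 with m = 1, written with the regularized hypergeometric series
  (rGamma = 1/Gamma, which is 0 at the poles of Gamma).\<close>
definition meijerG_1 :: "nat \<Rightarrow> real list \<Rightarrow> real list \<Rightarrow> real \<Rightarrow> real" where
  "meijerG_1 n as bs z =
     (let p = length as; q = length bs; b1 = bs ! 0 in
      (\<Prod>l<n. Gamma (1 + b1 - as ! l)) * (\<Prod>l\<in>{n..<p}. rGamma (as ! l - b1)) * z powr b1 *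
      (\<Sum>k. (\<Prod>l<p. pochhammer (1 + b1 - as ! l) k) * (\<Prod>l\<in>{1..<q}. rGamma (1 + b1 - bs ! l + real k))
            * (((-1) powi (int p - 1 - int n)) * z) ^ k / fact k))"

end

theory Submission
  imports Defs
begin

(* P is the Gamma CDF composed with the affine map x \<mapsto> \<lambda> - 1 + \<lambda> x, so
   P''(x) = \<lambda>^2 f'(y) with y = \<lambda> - 1 + \<lambda> x, f the Gamma density and
   f'(y) = f(y) ((m - 1)/y - m/g).
   For the parameters (0, 1; m, 0, 2) the residue series of the Meijer G-function
   collapses to the exponential series \<Sum> (m - 1 + k) (-z)^k / k! = (m - 1 - z) e^(-z), so
   G(z) = z^m e^(-z) (m - 1 - z), which is y^2 \<Gamma>(m) f'(y) at z = m y / g.  Finally a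
   Gamma variable with shape m and mean g has moments \<Gamma>(m + i) / \<Gamma>(m) (g / m)^i,
   hence variance g^2 / m = ((m + 1)/m - 1) g^2. *)

lemma sums_linear_times_exp:
  fixes a x :: real
  shows "(\<lambda>k. (a + real k) * x ^ k / fact k) sums ((a + x) * exp x)"
proof -
  have exp: "(\<lambda>k. x ^ k / fact k) sums exp x"
    using exp_converges[of x] by (simp add: divide_inverse mult.commute)
  have "(\<lambda>k. real (Suc k) * x ^ Suc k / fact (Suc k)) = (\<lambda>k. x * (x ^ k / fact k))"
    by (simp add: fun_eq_iff del: of_nat_Suc)
  then have "(\<lambda>k. real k * x ^ k / fact k) sums (x * exp x)"
    using sums_mult[OF exp, of x] sums_Suc_iff[of "\<lambda>k. real k * x ^ k / fact k"] by simp
  from sums_add[OF sums_mult[OF exp, of a] this] show ?thesis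
    by (simp add: algebra_simps add_divide_distrib)
qed

lemma meijerG_1_01_m02_closed_form:
  fixes m z :: real
  assumes "m > 0"
  shows "meijerG_1 2 [0, 1] [m, 0, 2] z = z powr m * exp (- z) * (m - 1 - z)"
proof -
  define T where "T = (\<lambda>k. pochhammer (1 + m) k * pochhammer m k
      * (rGamma (1 + m + real k) * rGamma (m - 1 + real k)) * (- z) ^ k / fact k)"
  have series: "meijerG_1 2 [0, 1] [m, 0, 2] z = z powr m * (Gamma (1 + m) * Gamma m * suminf T)"
    by (simp add: meijerG_1_def T_def lessThan_nat_numeral atLeastLessThan_nat_numeral ac_simps)
  have Gamma_rGamma: "Gamma x * rGamma x = 1" if "x > 0" for x :: real
    using Gamma_real_pos[OF that] by (simp add: rGamma_inverse_Gamma)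
  have "Gamma (1 + m) * Gamma m * T k = (m - 1 + real k) * (- z) ^ k / fact k" for k
  proof -
    have first: "Gamma (1 + m) * pochhammer (1 + m) k * rGamma (1 + m + real k) = 1"
      using Gamma_rGamma[of "1 + m"] assms by (simp add: pochhammer_rGamma[of "1 + m" k] ac_simps)
    have "Gamma m * pochhammer m k * rGamma (m - 1 + real k)
        = (m - 1 + real k) * (Gamma m * (pochhammer m k * rGamma (m + real k)))"
      using rGamma_plus1[of "m - 1 + real k"] by (simp add: ac_simps)
    also have "\<dots> = m - 1 + real k"
      using Gamma_rGamma[of m] assms by (simp add: pochhammer_rGamma[of m k])
    finally have second: "Gamma m * pochhammer m k * rGamma (m - 1 + real k) = m - 1 + real k" .
    have "Gamma (1 + m) * Gamma m * T k
        = (Gamma (1 + m) * pochhammer (1 + m) k * rGamma (1 + m + real k))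
          * (Gamma m * pochhammer m k * rGamma (m - 1 + real k)) * (- z) ^ k / fact k"
      by (simp add: T_def ac_simps)
    then show ?thesis
      unfolding first second by simp
  qed
  then have "(\<lambda>k. Gamma (1 + m) * Gamma m * T k) sums ((m - 1 - z) * exp (- z))"
    using sums_linear_times_exp[of "m - 1" "- z"] by simp
  moreover have "Gamma (1 + m) \<noteq> 0" "Gamma m \<noteq> 0"
    using Gamma_rGamma[of m] Gamma_rGamma[of "1 + m"] assms by auto
  ultimately have "Gamma (1 + m) * Gamma m * suminf T = (m - 1 - z) * exp (- z)"
    by (auto simp: sums_iff suminf_mult)
  then show ?thesis
    unfolding series by (simp add: ac_simps)
qed

lemma has_bochner_integral_lborel_Gamma:
  fixes s :: real
  assumes "s > 0"
  shows "has_bochner_integral lborel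
           (\<lambda>t. if 0 < t then t powr (s - 1) * exp (- t) else 0) (Gamma s)"
proof -
  let ?f = "\<lambda>t::real. if 0 < t then t powr (s - 1) * exp (- t) else 0"
  have restrict: "?f = (\<lambda>t. if t \<in> {0..} then t powr (s - 1) / exp t else 0)"
    by (auto simp: fun_eq_iff exp_minus field_simps)
  have "(?f has_integral Gamma s) UNIV"
    unfolding restrict has_integral_restrict_UNIV by (rule Gamma_integral_real[OF assms])
  then have "integral\<^sup>N lborel ?f = ennreal (Gamma s)"
    by (intro nn_integral_has_integral_lborel) auto
  then show ?thesis
    using assms by (intro has_bochner_integral_nn_integral) auto
qed

lemma has_bochner_integral_gamma_density_moment:
  fixes m g :: real and i :: nat
  assumes "m > 0" "g > 0"
  shows "has_bochner_integral lborel (\<lambda>x. gamma_density m g x * x ^ i)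
           (Gamma (m + i) / Gamma m * (g / m) ^ i)"
proof -
  define c where "c = m / g"
  have c: "c > 0" using assms by (simp add: c_def)
  \<comment> \<open>substitute t = c x in the Gamma integral of order m + i\<close>
  let ?f = "\<lambda>t::real. if 0 < t then t powr (m + i - 1) * exp (- t) else 0"
  define K where "K = c powr (1 - real i) / Gamma m"
  have "has_bochner_integral lborel (\<lambda>x. ?f (0 + c * x)) (Gamma (m + i) /\<^sub>R \<bar>c\<bar>)"
    using c assms
    by (intro lborel_has_bochner_integral_real_affine_iff[THEN iffD1]
        has_bochner_integral_lborel_Gamma) auto
  then have "has_bochner_integral lborel (\<lambda>x. K * ?f (0 + c * x)) (K * (Gamma (m + i) / c))"
    using c by (intro has_bochner_integral_mult_right) (simp add: divide_inverse mult.commute)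
  moreover have "K * ?f (0 + c * x) = gamma_density m g x * x ^ i" for x
  proof (cases "x > 0")
    case True
    then have "(c * x) powr (m + i - 1) = c powr (m + i - 1) * x powr (m - 1) * x ^ i"
      using c by (simp add: powr_mult powr_realpow[symmetric] powr_add[symmetric] algebra_simps)
    moreover have "c powr (1 - real i) * c powr (m + i - 1) = c powr m"
      by (simp add: powr_add[symmetric])
    moreover have "0 < m * x / g" using True assms by simp
    ultimately show ?thesis
      using True c by (simp add: K_def gamma_density_def c_def field_simps)
  next
    case False
    then show ?thesis using c by (simp add: gamma_density_def zero_less_mult_iff)
  qed
  moreover have "K * (Gamma (m + i) / c) = Gamma (m + i) / Gamma m * (g / m) ^ i"
    using c assms by (simp add: K_def powr_diff powr_realpow c_def field_simps)
  ultimately show ?thesis by simp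
qed

lemma has_bochner_integral_gamma_distributed_moment:
  fixes X :: "'s \<Rightarrow> real" and m g :: real and i :: nat
  assumes "m > 0" "g > 0"
    and D: "distributed M lborel X (\<lambda>x. ennreal (gamma_density m g x))"
  shows "has_bochner_integral M (\<lambda>\<omega>. X \<omega> ^ i) (Gamma (m + i) / Gamma m * (g / m) ^ i)"
proof -
  have nonneg: "0 \<le> gamma_density m g x" for x
    using assms by (simp add: gamma_density_def)
  note moment = has_bochner_integral_gamma_density_moment[OF assms(1,2), of i]
  have "integrable M (\<lambda>\<omega>. X \<omega> ^ i)"
    using distributed_integrable[OF D, of "\<lambda>x. x ^ i"] integrable.intros[OF moment] nonneg
    by simp
  moreover have "(\<integral>\<omega>. X \<omega> ^ i \<partial>M) = Gamma (m + i) / Gamma m * (g / m) ^ i"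
    using distributed_integral[OF D, of "\<lambda>x. x ^ i"] has_bochner_integral_integral_eq[OF moment]
      nonneg by simp
  ultimately show ?thesis by (simp add: has_bochner_integral_iff)
qed

lemma (in prob_space) gamma_distributed_variance:
  fixes X :: "'a \<Rightarrow> real" and m g :: real
  assumes "m > 0" "g > 0"
    and "distributed M lborel X (\<lambda>x. ennreal (gamma_density m g x))"
  shows "variance X = g\<^sup>2 / m"
proof (subst variance_eq)
  note moment = has_bochner_integral_gamma_distributed_moment[OF assms]
  show "integrable M X" "integrable M (\<lambda>\<omega>. (X \<omega>)\<^sup>2)"
    using moment[of 1, THEN integrable.intros]
      moment[of 2, THEN integrable.intros] by simp_all
  have "m \<notin> \<int>\<^sub>\<le>\<^sub>0" "m + 1 \<notin> \<int>\<^sub>\<le>\<^sub>0"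
    using \<open>m > 0\<close> by (auto dest: nonpos_Ints_nonpos)
  then have "Gamma (m + 1) = m * Gamma m" "Gamma (m + 2) = (m + 1) * (m * Gamma m)"
    using Gamma_plus1[of m] Gamma_plus1[of "m + 1"] by (simp_all add: add.assoc)
  moreover have "Gamma m \<noteq> 0" using Gamma_real_pos[OF \<open>m > 0\<close>] by simp
  ultimately have "Gamma (m + 1) / Gamma m = m" "Gamma (m + 2) / Gamma m = (m + 1) * m"
    by simp_all
  then have "expectation X = g"
    and "expectation (\<lambda>\<omega>. (X \<omega>)\<^sup>2) = (m + 1) * m * (g / m)\<^sup>2"
    using moment[of 1, THEN has_bochner_integral_integral_eq]
      moment[of 2, THEN has_bochner_integral_integral_eq] \<open>m > 0\<close> by simp_all
  moreover have "(m + 1) * m * (g / m)\<^sup>2 - g\<^sup>2 = g\<^sup>2 / m"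
    using \<open>m > 0\<close> by (simp add: field_simps power2_eq_square)
  ultimately show "expectation (\<lambda>\<omega>. (X \<omega>)\<^sup>2) - (expectation X)\<^sup>2 = g\<^sup>2 / m"
    by simp
qed

lemma has_real_derivative_comp_affine:
  fixes f :: "real \<Rightarrow> real"
  assumes "(f has_real_derivative D) (at (a + b * x))"
  shows "((\<lambda>y. f (a + b * y)) has_real_derivative b * D) (at x)"
proof -
  have "((\<lambda>y. a + b * y) has_real_derivative b) (at x)"
    by (auto intro!: derivative_eq_intros)
  from DERIV_chain2[where g = "\<lambda>y. a + b * y", OF assms this] show ?thesis
    by (simp add: mult.commute)
qed

lemma lower_inc_Gamma_has_real_derivative:
  fixes s x :: real
  assumes "s > 0" "x > 0"
  shows "(lower_inc_Gamma s has_real_derivative x powr (s - 1) * exp (- x)) (at x)"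
proof -
  let ?h = "\<lambda>t::real. t powr (s - 1) * exp (- t)"
  have "(?h has_integral Gamma s) {0..}"
    using Gamma_integral_real[OF assms(1)] by (simp add: exp_minus field_simps)
  then have integrable: "?h integrable_on {0..x + 1}"
    by (intro integrable_on_subinterval[of _ "{0..}"]) (auto simp: integrable_on_def)
  have "isCont ?h x"
    using assms(2) by (intro continuous_intros) auto
  then have "continuous (at x within {0..x + 1} - {}) ?h"
    by (rule continuous_at_imp_continuous_at_within)
  moreover have "x \<in> {0..x + 1} - {}"
    using assms(2) by simp
  ultimately have "((\<lambda>y. integral {0..y} ?h) has_vector_derivative ?h x)
      (at x within {0..x + 1} - {})"
    using integral_has_vector_derivative_continuous_at[OF integrable _ finite.emptyI] by blast
  moreover have "at x within {0..x + 1} - {} = at x"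
    using assms(2) by (intro at_within_interior) auto
  ultimately show ?thesis
    unfolding lower_inc_Gamma_def has_real_derivative_iff_has_vector_derivative by simp
qed

lemma gamma_cdf_has_real_derivative:
  fixes m g x :: real
  assumes "m > 0" "g > 0" "x > 0"
  shows "(gamma_cdf m g has_real_derivative gamma_density m g x) (at x)"
proof -
  let ?u = "m / g * x"
  have "0 + m / g * x > 0" using assms by simp
  from has_real_derivative_comp_affine[OF lower_inc_Gamma_has_real_derivative[OF assms(1) this]]
  have "((\<lambda>y. lower_inc_Gamma m (0 + m / g * y) / Gamma m) has_real_derivative
      m / g * (?u powr (m - 1) * exp (- ?u)) / Gamma m) (at x)"
    by (intro DERIV_cdivide) simp
  moreover have "(\<lambda>y. lower_inc_Gamma m (0 + m / g * y) / Gamma m) = gamma_cdf m g"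
    by (simp add: fun_eq_iff gamma_cdf_def)
  moreover have "m / g * (?u powr (m - 1) * exp (- ?u)) / Gamma m = gamma_density m g x"
    using assms by (simp add: gamma_density_def powr_mult powr_divide powr_diff field_simps)
  ultimately show ?thesis by simp
qed

lemma gamma_density_has_real_derivative:
  fixes m g x :: real
  assumes "m > 0" "g > 0" "x > 0"
  shows "(gamma_density m g has_real_derivative
           gamma_density m g x * ((m - 1) / x - m / g)) (at x)"
proof -
  define c where "c = (m / g) powr m / Gamma m"
  let ?f = "\<lambda>y. c * (y powr (m - 1) * exp (- (m / g * y)))"
  have "((\<lambda>y. y powr (m - 1) * exp (- (m / g * y))) has_real_derivative
      (m - 1) * x powr (m - 1 - 1) * exp (- (m / g * x))
      + - (m / g) * exp (- (m / g * x)) * x powr (m - 1)) (at x)"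
    using assms by (intro DERIV_mult[OF has_real_derivative_powr]) (auto intro!: derivative_eq_intros)
  then have deriv_f: "(?f has_real_derivative c * ((m - 1) * x powr (m - 1 - 1) * exp (- (m / g * x))
      + - (m / g) * exp (- (m / g * x)) * x powr (m - 1))) (at x)"
    by (rule DERIV_cmult)
  have density: "gamma_density m g y = ?f y" if "y > 0" for y
    using that by (simp add: gamma_density_def c_def)
  have "c * ((m - 1) * x powr (m - 1 - 1) * exp (- (m / g * x))
      + - (m / g) * exp (- (m / g * x)) * x powr (m - 1)) = ?f x * ((m - 1) / x - m / g)"
    using assms(3) by (simp add: powr_diff field_simps power2_eq_square)
  from deriv_f[unfolded this, folded density[OF assms(3)]] show ?thesis
    by (rule has_field_derivative_transform_within_open[where S = "{0<..}"])
       (use assms density in auto)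
qed

lemma deriv2_gamma_cdf_affine:
  fixes m g a b x :: real
  assumes "m > 0" "g > 0" "a + b * x > 0"
  shows "deriv (deriv (\<lambda>y. gamma_cdf m g (a + b * y))) x
           = b\<^sup>2 * (gamma_density m g (a + b * x) * ((m - 1) / (a + b * x) - m / g))"
proof -
  have "open {y. a + b * y > 0}"
    by (intro open_Collect_less continuous_intros)
  from eventually_nhds_in_open[OF this, of x]
  have "eventually (\<lambda>y. a + b * y > 0) (nhds x)"
    using assms(3) by simp
  then have "eventually (\<lambda>y. deriv (\<lambda>y. gamma_cdf m g (a + b * y)) y
      = b * gamma_density m g (a + b * y)) (nhds x)"
    by eventually_elim
       (intro DERIV_imp_deriv has_real_derivative_comp_affine gamma_cdf_has_real_derivative assms)
  then have "deriv (deriv (\<lambda>y. gamma_cdf m g (a + b * y))) x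
      = deriv (\<lambda>y. b * gamma_density m g (a + b * y)) x"
    by (rule deriv_cong_ev) simp
  also have "\<dots> = b\<^sup>2 * (gamma_density m g (a + b * x) * ((m - 1) / (a + b * x) - m / g))"
    using has_real_derivative_comp_affine[OF gamma_density_has_real_derivative[OF assms]]
    by (intro DERIV_imp_deriv) (auto intro!: DERIV_cmult simp: power2_eq_square ac_simps)
  finally show ?thesis .
qed

lemma gamma_density_derivative_eq_meijerG:
  fixes m g y :: real
  assumes "m > 0" "g > 0" "y > 0"
  shows "gamma_density m g y * ((m - 1) / y - m / g)
           = meijerG_1 2 [0, 1] [m, 0, 2] (m * y / g) / (y\<^sup>2 * Gamma m)"
  using assms
  by (simp add: meijerG_1_01_m02_closed_form gamma_density_def powr_mult powr_divide powr_diff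
      field_simps power2_eq_square)

theorem corollary3p2:
  fixes M :: "'s measure" and Xd Xe :: "'s \<Rightarrow> real"
    and Rs md me gd ge sigma2 lambda :: real and P :: "real \<Rightarrow> real"
  assumes "prob_space M"
    and "Rs > 0" and "lambda = 2 powr Rs"
    and "md > 0" and "me > 0" and "gd > 0" and "ge > 0"
    and "distributed M lborel Xd (\<lambda>x. ennreal (gamma_density md gd x))"
    and "distributed M lborel Xe (\<lambda>x. ennreal (gamma_density me ge x))"
    and "prob_space.indep_var M borel Xd borel Xe"
    and "sigma2 = prob_space.variance M Xe"
    and "P = (\<lambda>x. gamma_cdf md gd (lambda - 1 + lambda * x))"
  shows "P ge + sigma2 / 2 * deriv (deriv P) ge =
           lower_inc_Gamma md (md * (lambda - 1 + lambda * ge) / gd) / Gamma md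
           + ge\<^sup>2 * lambda\<^sup>2 *
             (((me + 1) / me - 1) *
               meijerG_1 2 [0, 1] [md, 0, 2] (md * (lambda - 1 + lambda * ge) / gd))
             / (2 * Gamma md * (lambda - 1 + lambda * ge)\<^sup>2)"
proof -
  note md = \<open>md > 0\<close> and gd = \<open>gd > 0\<close>
  define y where "y = lambda - 1 + lambda * ge"
  have "lambda > 1"
    using \<open>Rs > 0\<close> \<open>lambda = 2 powr Rs\<close> by (simp add: gr_one_powr)
  then have y: "y > 0"
    using \<open>ge > 0\<close> by (simp add: y_def add_pos_pos)
  have "sigma2 = ge\<^sup>2 / me"
    using prob_space.gamma_distributed_variance[OF \<open>prob_space M\<close> \<open>me > 0\<close> \<open>ge > 0\<close>]
      \<open>distributed M lborel Xe _\<close> \<open>sigma2 = _\<close> by simp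
  moreover have "deriv (deriv P) ge
      = lambda\<^sup>2 * (meijerG_1 2 [0, 1] [md, 0, 2] (md * y / gd) / (y\<^sup>2 * Gamma md))"
    using deriv2_gamma_cdf_affine[OF md gd, of "lambda - 1" lambda ge]
      gamma_density_derivative_eq_meijerG[OF md gd y]
    by (simp add: \<open>P = _\<close> y_def[symmetric] y)
  moreover have "P ge = lower_inc_Gamma md (md * y / gd) / Gamma md"
    by (simp add: \<open>P = _\<close> gamma_cdf_def y_def)
  moreover have "(me + 1) / me - 1 = 1 / me"
    using \<open>me > 0\<close> by (simp add: field_simps)
  ultimately show ?thesis
    unfolding y_def[symmetric] by (simp add: field_simps)
qed

end
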